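(* Let $v,w\ge 3$ be integers for which there exist a Steiner triple system $\mathrm{STS}(v)$ and a Steiner triple system $\mathrm{STS}(w)$, and suppose at least one of these two systems admits a zero-sum $k$-flow for some integer $k\ge 3$. Then there exists an $\mathrm{STS}(vw)$ which admits a zero-sum $k$-flow.
   Context: A Steiner triple system $\mathrm{STS}(v)$ is a pair $(X,\mathcal{B})$ where $|X|=v$ and $\mathcal{B}$ is a collection of 3-subsets (blocks) of $X$ such that every 2-subset of $X$ lies in exactly one block. More generally, for a $t$-$(v,k,\lambda)$ design $(X,\mathcal{B})$ and an integer $n\ge 2$, a zero-sum $n$-flow is a map $f:\mathcal{B}\to\{\pm1,\pm2,\ldots,\pm(n-1)\}$ such that for every point $x\in X$, $\sum_{B\in\mathcal{B},\,x\in B} f(B)=0$ (equivalently, a vector with entries in $\{\pm1,\ldots,\pm(n-1)\}$ in the null space of the point–block incidence matrix). *)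

theory Defs
  imports Main
begin

definition is_sts :: "'a set \<Rightarrow> 'a set set \<Rightarrow> bool" where
  "is_sts X B \<longleftrightarrow> finite X \<and> (\<forall>b\<in>B. b \<subseteq> X \<and> card b = 3) \<and>
     (\<forall>x\<in>X. \<forall>y\<in>X. x \<noteq> y \<longrightarrow> (\<exists>!b. b \<in> B \<and> {x, y} \<subseteq> b))"

definition is_zero_sum_flow :: "'a set \<Rightarrow> 'a set set \<Rightarrow> nat \<Rightarrow> ('a set \<Rightarrow> int) \<Rightarrow> bool" where
  "is_zero_sum_flow X B n f \<longleftrightarrow>
     (\<forall>b\<in>B. f b \<noteq> 0 \<and> \<bar>f b\<bar> \<le> int n - 1) \<and>
     (\<forall>x\<in>X. (\<Sum>b\<in>{b\<in>B. x \<in> b}. f b) = 0)"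

definition has_zero_sum_flow :: "'a set \<Rightarrow> 'a set set \<Rightarrow> nat \<Rightarrow> bool" where
  "has_zero_sum_flow X B n \<longleftrightarrow> (\<exists>f. is_zero_sum_flow X B n f)"

end

theory Submission
  imports Defs
begin

(* Put an STS on X1 \<times> X2 whose blocks are b \<times> {a} (b \<in> B1), {x} \<times> b (b \<in> B2) and, for all
   b1 \<in> B1 and b2 \<in> B2, the six lines of the 3 \<times> 3 grid b1 \<times> b2 that are neither rows nor columns
   (the sloped lines of the affine plane AG(2,3)).  Given a zero-sum flow f of (X1, B1) and weights
   \<alpha>, \<beta> on B1, give b \<times> {a} the value f b, the lines of slope 1 and 2 in b1 \<times> b2 the values \<alpha> b1
   and \<beta> b1, and {x} \<times> b the value -N x, where N x sums \<alpha> + \<beta> over the blocks through x.  At a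
   point (x, a) the sloped lines contribute N x once for every block through a, the columns cancel
   this, and the rows contribute the f-sum at x, which is 0.  Taking \<alpha> + \<beta> = \<plusminus>1 on the blocks
   through a fixed point p, about half of each sign, and 0 elsewhere gives N x \<in> {-1, 1, 2}; with
   \<alpha> \<in> {1, 2} and \<beta> \<in> {-1, -2} all values lie in {\<plusminus>1, \<plusminus>2}, so this is a k-flow for k \<ge> 3. *)


lemma is_stsI:
  assumes "finite X" "\<And>b. b \<in> B \<Longrightarrow> b \<subseteq> X \<and> card b = 3"
    and "\<And>x y. x \<in> X \<Longrightarrow> y \<in> X \<Longrightarrow> x \<noteq> y \<Longrightarrow> \<exists>b\<in>B. x \<in> b \<and> y \<in> b"
    and "\<And>x y b b'. x \<noteq> y \<Longrightarrow> b \<in> B \<Longrightarrow> b' \<in> B \<Longrightarrow> {x, y} \<subseteq> b \<Longrightarrow> {x, y} \<subseteq> b' \<Longrightarrow> b = b'"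
  shows "is_sts X B"
  unfolding is_sts_def
proof (intro conjI ballI impI)
  fix x y assume "x \<in> X" "y \<in> X" "x \<noteq> y"
  then obtain b where "b \<in> B" "{x, y} \<subseteq> b" using assms(3) by blast
  then show "\<exists>!b. b \<in> B \<and> {x, y} \<subseteq> b"
    using assms(4)[OF \<open>x \<noteq> y\<close>] by (intro ex1I[of _ b]) auto
qed (use assms(1,2) in auto)

lemma
  assumes "is_sts X B"
  shows sts_finite: "finite X"
    and sts_block_subset: "b \<in> B \<Longrightarrow> b \<subseteq> X"
    and sts_card_block: "b \<in> B \<Longrightarrow> card b = 3"
  using assms unfolding is_sts_def by simp_all

lemma sts_block_nonempty: "is_sts X B \<Longrightarrow> b \<in> B \<Longrightarrow> b \<noteq> {}"
  using sts_card_block by fastforce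

lemma sts_block_through:
  assumes "is_sts X B" "x \<in> X" "y \<in> X" "x \<noteq> y"
  shows "\<exists>b\<in>B. x \<in> b \<and> y \<in> b"
proof -
  have "\<exists>!b. b \<in> B \<and> {x, y} \<subseteq> b" using assms unfolding is_sts_def by simp
  then show ?thesis by auto
qed

lemma sts_block_unique:
  assumes "is_sts X B" "b \<in> B" "b' \<in> B" "{x, y} \<subseteq> b" "{x, y} \<subseteq> b'" "x \<noteq> y"
  shows "b = b'"
proof -
  have "x \<in> X" "y \<in> X" using assms(2,4) sts_block_subset[OF assms(1)] by auto
  then have "\<exists>!b. b \<in> B \<and> {x, y} \<subseteq> b"
    using assms(1,6) unfolding is_sts_def by simp
  then show ?thesis using assms(2-5) by (metis (no_types, lifting))
qed

lemma sts_finite_blocks: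
  assumes "is_sts X B"
  shows "finite B"
proof (rule finite_subset)
  show "B \<subseteq> Pow X" using sts_block_subset[OF assms] by blast
  show "finite (Pow X)" using sts_finite[OF assms] by simp
qed

definition incidence_sum :: "'a set set \<Rightarrow> ('a set \<Rightarrow> int) \<Rightarrow> 'a \<Rightarrow> int" where
  "incidence_sum B \<mu> x = (\<Sum>b\<in>{b\<in>B. x \<in> b}. \<mu> b)"

lemma incidence_sum_eq_sum_if:
  "finite B \<Longrightarrow> incidence_sum B \<mu> x = (\<Sum>b\<in>B. if x \<in> b then \<mu> b else 0)"
  unfolding incidence_sum_def by (simp add: sum.inter_filter)

lemma has_zero_sum_flow_of_labelling:
  assumes "finite L" "inj_on g L"
    and bounds: "\<And>l. l \<in> L \<Longrightarrow> w l \<noteq> 0 \<and> \<bar>w l\<bar> \<le> int k - 1"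
    and sums: "\<And>x. x \<in> X \<Longrightarrow> (\<Sum>l\<in>L. if x \<in> g l then w l else 0) = 0"
  shows "has_zero_sum_flow X (g ` L) k"
proof -
  define F where "F b = w (the_inv_into L g b)" for b
  have F_g: "F (g l) = w l" if "l \<in> L" for l
    using the_inv_into_f_f[OF assms(2) that] unfolding F_def by simp
  have "(\<Sum>b\<in>{b\<in>g ` L. x \<in> b}. F b) = 0" if "x \<in> X" for x
  proof -
    have "{b\<in>g ` L. x \<in> b} = g ` {l\<in>L. x \<in> g l}" by blast
    moreover have "inj_on g {l\<in>L. x \<in> g l}" using assms(2) by (rule inj_on_subset) blast
    ultimately have "(\<Sum>b\<in>{b\<in>g ` L. x \<in> b}. F b) = (\<Sum>l\<in>{l\<in>L. x \<in> g l}. w l)"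
      by (simp add: sum.reindex F_g)
    also have "\<dots> = (\<Sum>l\<in>L. if x \<in> g l then w l else 0)"
      using assms(1) by (simp add: sum.inter_filter)
    finally show ?thesis using sums[OF that] by simp
  qed
  then have "is_zero_sum_flow X (g ` L) k F"
    unfolding is_zero_sum_flow_def using bounds F_g by auto
  then show ?thesis unfolding has_zero_sum_flow_def by blast
qed

lemma is_sts_inj_image:
  assumes "inj_on h X" "is_sts X B"
  shows "is_sts (h ` X) ((`) h ` B)"
proof (rule is_stsI)
  show "finite (h ` X)" using sts_finite[OF assms(2)] by simp
  fix b' assume "b' \<in> (`) h ` B"
  then obtain b where b: "b \<in> B" "b' = h ` b" by blast
  then have "b \<subseteq> X" "card b = 3" using sts_block_subset[OF assms(2)] sts_card_block[OF assms(2)] by auto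
  then show "b' \<subseteq> h ` X \<and> card b' = 3"
    using b(2) card_image[OF inj_on_subset[OF assms(1)]] by auto
next
  fix u v assume "u \<in> h ` X" "v \<in> h ` X" "u \<noteq> v"
  then obtain x y where "x \<in> X" "y \<in> X" "x \<noteq> y" "u = h x" "v = h y" by blast
  then obtain b where "b \<in> B" "x \<in> b" "y \<in> b" using sts_block_through[OF assms(2)] by blast
  then show "\<exists>b'\<in>(`) h ` B. u \<in> b' \<and> v \<in> b'" using \<open>u = h x\<close> \<open>v = h y\<close> by blast
next
  fix u v b' b'' assume uv: "u \<noteq> v" and blocks: "b' \<in> (`) h ` B" "b'' \<in> (`) h ` B"
    and on_blocks: "{u, v} \<subseteq> b'" "{u, v} \<subseteq> b''"
  obtain b b0 where b: "b \<in> B" "b' = h ` b" and b0: "b0 \<in> B" "b'' = h ` b0" using blocks by blast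
  obtain x y where xy: "x \<in> b" "y \<in> b" "u = h x" "v = h y" using on_blocks(1) b(2) by blast
  have "x \<in> X" "y \<in> X" "b0 \<subseteq> X" using xy b b0 sts_block_subset[OF assms(2)] by blast+
  then have "x \<in> b0" "y \<in> b0"
    using on_blocks(2) b0(2) xy(3,4) inj_on_image_mem_iff[OF assms(1)] by auto
  then show "b' = b''"
    using sts_block_unique[OF assms(2) b(1) b0(1), of x y] xy uv b(2) b0(2) by auto
qed

lemma has_zero_sum_flow_inj_image:
  assumes "inj_on h X" "is_sts X B" "has_zero_sum_flow X B k"
  shows "has_zero_sum_flow (h ` X) ((`) h ` B) k"
proof -
  obtain f where f: "is_zero_sum_flow X B k f" using assms(3) unfolding has_zero_sum_flow_def by blast
  have B_Pow: "B \<subseteq> Pow X" using sts_block_subset[OF assms(2)] by blast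
  show ?thesis
  proof (rule has_zero_sum_flow_of_labelling)
    show "finite B" by (rule sts_finite_blocks[OF assms(2)])
    show "inj_on ((`) h) B" using inj_on_image_Pow[OF assms(1)] B_Pow by (rule inj_on_subset)
    show "f b \<noteq> 0 \<and> \<bar>f b\<bar> \<le> int k - 1" if "b \<in> B" for b
      using f that unfolding is_zero_sum_flow_def by blast
    fix u assume "u \<in> h ` X"
    then obtain x where x: "x \<in> X" "u = h x" by blast
    show "(\<Sum>b\<in>B. if u \<in> h ` b then f b else 0) = 0"
    proof -
      have "u \<in> h ` b \<longleftrightarrow> x \<in> b" if "b \<in> B" for b
        using x assms(1) B_Pow that unfolding inj_on_def by blast
      then have "(\<Sum>b\<in>B. if u \<in> h ` b then f b else 0) = incidence_sum B f x"
        by (simp add: incidence_sum_eq_sum_if[OF sts_finite_blocks[OF assms(2)]] cong: sum.cong)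
      also have "\<dots> = 0" using f x(1) unfolding is_zero_sum_flow_def incidence_sum_def by blast
      finally show ?thesis .
    qed
  qed
qed

lemma sts_with_flow_on_nat:
  assumes "is_sts X B" "has_zero_sum_flow X B k"
  shows "\<exists>(Y :: nat set) B'. is_sts Y B' \<and> card Y = card X \<and> has_zero_sum_flow Y B' k"
proof -
  obtain h :: "'a \<Rightarrow> nat" where "bij_betw h X {0..<card X}"
    using ex_bij_betw_finite_nat[OF sts_finite[OF assms(1)]] by blast
  then have inj: "inj_on h X" by (simp add: bij_betw_def)
  show ?thesis
  proof (intro exI conjI)
    show "is_sts (h ` X) ((`) h ` B)" using is_sts_inj_image[OF inj assms(1)] .
    show "card (h ` X) = card X" using inj by (rule card_image)
    show "has_zero_sum_flow (h ` X) ((`) h ` B) k" using has_zero_sum_flow_inj_image[OF inj assms] .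
  qed
qed

lemma mod3_line_through:
  fixes t t' m m' :: nat
  assumes "t < 3" "t' < 3" "m < 3" "m' < 3" "t \<noteq> t'" "m \<noteq> m'"
  shows "\<exists>c\<in>{1,2}. \<exists>j<3. m = (j + c*t) mod 3 \<and> m' = (j + c*t') mod 3"
proof -
  have table: "\<forall>t\<in>{0,1,2::nat}. \<forall>t'\<in>{0,1,2}. \<forall>m\<in>{0,1,2::nat}. \<forall>m'\<in>{0,1,2}. t \<noteq> t' \<longrightarrow> m \<noteq> m' \<longrightarrow>
    (\<exists>c\<in>{1,2}. \<exists>j\<in>{0,1,2}. m = (j + c*t) mod 3 \<and> m' = (j + c*t') mod 3)"
    by simp
  have "t \<in> {0,1,2}" "t' \<in> {0,1,2}" "m \<in> {0,1,2}" "m' \<in> {0,1,2}" using assms by auto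
  from table[rule_format, OF this assms(5,6)] obtain c j where
    "c \<in> {1,2}" "j \<in> {0,1,2}" "m = (j + c*t) mod 3 \<and> m' = (j + c*t') mod 3" by (elim bexE)
  then show ?thesis by (intro bexI[of _ c] exI[of _ j]) auto
qed

lemma mod3_line_unique:
  fixes t t' c c' j j' :: nat
  assumes "t < 3" "t' < 3" "t \<noteq> t'" "c \<in> {1,2}" "c' \<in> {1,2}" "j < 3" "j' < 3"
    "(j + c*t) mod 3 = (j' + c'*t) mod 3" "(j + c*t') mod 3 = (j' + c'*t') mod 3"
  shows "c = c' \<and> j = j'"
proof -
  have table: "\<forall>t\<in>{0,1,2::nat}. \<forall>t'\<in>{0,1,2}. \<forall>c\<in>{1,2::nat}. \<forall>c'\<in>{1,2}. \<forall>j\<in>{0,1,2::nat}. \<forall>j'\<in>{0,1,2}.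
    t \<noteq> t' \<longrightarrow> (j + c*t) mod 3 = (j' + c'*t) mod 3 \<longrightarrow> (j + c*t') mod 3 = (j' + c'*t') mod 3 \<longrightarrow>
    c = c' \<and> j = j'"
    by simp
  have "t \<in> {0,1,2}" "t' \<in> {0,1,2}" "j \<in> {0,1,2}" "j' \<in> {0,1,2}" using assms by auto
  from table[rule_format, OF this(1,2) assms(4,5) this(3,4) assms(3,8,9)] show ?thesis .
qed

lemma mod3_offset_unique:
  fixes t m c :: nat
  assumes "t < 3" "m < 3" "c \<in> {1,2}"
  shows "(\<Sum>j<3. if m = (j + c*t) mod 3 then v else 0) = (v::int)"
proof -
  have table: "\<forall>t\<in>{0,1,2::nat}. \<forall>m\<in>{0,1,2::nat}. \<forall>c\<in>{1,2::nat}.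
    (if m = (0 + c*t) mod 3 then v else 0) + (if m = (1 + c*t) mod 3 then v else 0)
      + (if m = (2 + c*t) mod 3 then v else 0) = v"
    by simp
  have "t \<in> {0,1,2}" "m \<in> {0,1,2}" using assms by auto
  note three_terms = table[rule_format, OF this assms(3)]
  have "(\<Sum>j<3. h j) = h 0 + h 1 + h 2" for h :: "nat \<Rightarrow> int"
    by (simp add: numeral_3_eq_3 numeral_2_eq_2)
  then show ?thesis using three_terms by (rule trans)
qed

lemma mod3_affine_image:
  fixes c j :: nat
  assumes "c \<in> {1,2}"
  shows "(\<lambda>t. (j + c*t) mod 3) ` {..<3} = {..<3}"
proof -
  have table: "\<forall>c\<in>{1,2::nat}. \<forall>j\<in>{0,1,2::nat}. (\<lambda>t. (j + c*t) mod 3) ` {0,1,2} = {0,1,2}"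
    by auto
  have "j mod 3 \<in> {0,1,2}" by auto
  note reduced = table[rule_format, OF assms this]
  have "(\<lambda>t. (j + c*t) mod 3) = (\<lambda>t. (j mod 3 + c*t) mod 3)" by (simp add: mod_add_left_eq)
  moreover have "{..<3::nat} = {0,1,2}" by auto
  ultimately show ?thesis using reduced by (simp only:)
qed

definition enum3 :: "'a set \<Rightarrow> nat \<Rightarrow> 'a" where
  "enum3 b = (SOME g. bij_betw g {..<3} b)"

lemma bij_betw_enum3:
  assumes "card b = 3"
  shows "bij_betw (enum3 b) {..<3} b"
proof -
  have "finite b" using assms by (intro card_ge_0_finite) simp
  then obtain g where "bij_betw g {..<card b} b"
    using ex_bij_betw_nat_finite by (auto simp: atLeast0LessThan)
  then show ?thesis unfolding enum3_def using assms by (metis someI)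
qed

lemma enum3_surj:
  assumes "card b = 3" "x \<in> b"
  obtains t where "t < 3" "x = enum3 b t"
  using assms bij_betw_enum3[OF assms(1)] unfolding bij_betw_def by auto

(* In the coordinates given by enum3, the line t \<mapsto> (t, j + c t) over \<int>/3; slopes c \<in> {1, 2} and
   offsets j < 3 give the six lines of b1 \<times> b2 that are neither rows nor columns. *)
definition sloped_line :: "'a set \<Rightarrow> 'b set \<Rightarrow> nat \<Rightarrow> nat \<Rightarrow> ('a \<times> 'b) set" where
  "sloped_line b1 b2 c j = (\<lambda>t. (enum3 b1 t, enum3 b2 ((j + c*t) mod 3))) ` {..<3}"

context
  fixes b1 :: "'a set" and b2 :: "'b set"
  assumes card_b1: "card b1 = 3" and card_b2: "card b2 = 3"
begin

lemma enum3_mem_sloped_line_iff: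
  assumes "t < 3" "m < 3"
  shows "(enum3 b1 t, enum3 b2 m) \<in> sloped_line b1 b2 c j \<longleftrightarrow> m = (j + c*t) mod 3"
proof -
  have inj1: "inj_on (enum3 b1) {..<3}" and inj2: "inj_on (enum3 b2) {..<3}"
    using bij_betw_enum3[OF card_b1] bij_betw_enum3[OF card_b2] by (simp_all add: bij_betw_def)
  have "(enum3 b1 t, enum3 b2 m) \<in> sloped_line b1 b2 c j \<longleftrightarrow>
      (\<exists>t'<3. t = t' \<and> m = (j + c*t') mod 3)"
    unfolding sloped_line_def using assms inj_on_eq_iff[OF inj1] inj_on_eq_iff[OF inj2] by auto
  then show ?thesis using assms by auto
qed

lemma sloped_line_subset: "sloped_line b1 b2 c j \<subseteq> b1 \<times> b2"
  using bij_betw_enum3[OF card_b1] bij_betw_enum3[OF card_b2]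
  unfolding sloped_line_def bij_betw_def by auto

lemma card_sloped_line: "card (sloped_line b1 b2 c j) = 3"
proof -
  have "inj_on (\<lambda>t. (enum3 b1 t, enum3 b2 ((j + c*t) mod 3))) {..<3}"
    using bij_betw_enum3[OF card_b1] unfolding bij_betw_def inj_on_def by auto
  then show ?thesis unfolding sloped_line_def by (simp add: card_image)
qed

lemma fst_image_sloped_line: "fst ` sloped_line b1 b2 c j = b1"
  using bij_betw_enum3[OF card_b1] unfolding sloped_line_def bij_betw_def
  by (simp add: image_image)

lemma snd_image_sloped_line:
  assumes "c \<in> {1,2}"
  shows "snd ` sloped_line b1 b2 c j = b2"
proof -
  have "snd ` sloped_line b1 b2 c j = enum3 b2 ` (\<lambda>t. (j + c*t) mod 3) ` {..<3}"
    unfolding sloped_line_def by (simp add: image_image)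
  also have "\<dots> = b2"
    using mod3_affine_image[OF assms] bij_betw_enum3[OF card_b2] by (simp add: bij_betw_def)
  finally show ?thesis .
qed

lemma inj_on_fst_sloped_line: "inj_on fst (sloped_line b1 b2 c j)"
proof -
  have "finite (sloped_line b1 b2 c j)" using card_sloped_line by (intro card_ge_0_finite) simp
  then show ?thesis
    using inj_on_iff_eq_card card_sloped_line fst_image_sloped_line card_b1 by metis
qed

lemma inj_on_snd_sloped_line:
  assumes "c \<in> {1,2}"
  shows "inj_on snd (sloped_line b1 b2 c j)"
proof -
  have "finite (sloped_line b1 b2 c j)" using card_sloped_line by (intro card_ge_0_finite) simp
  then show ?thesis
    using inj_on_iff_eq_card card_sloped_line snd_image_sloped_line[OF assms] card_b2 by metis
qed

lemma sloped_line_through: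
  assumes "x \<in> b1" "y \<in> b1" "x \<noteq> y" "a \<in> b2" "e \<in> b2" "a \<noteq> e"
  shows "\<exists>c\<in>{1,2}. \<exists>j<3. {(x, a), (y, e)} \<subseteq> sloped_line b1 b2 c j"
proof -
  obtain t t' where t: "t < 3" "x = enum3 b1 t" and t': "t' < 3" "y = enum3 b1 t'"
    using enum3_surj[OF card_b1] assms(1,2) by metis
  obtain m m' where m: "m < 3" "a = enum3 b2 m" and m': "m' < 3" "e = enum3 b2 m'"
    using enum3_surj[OF card_b2] assms(4,5) by metis
  have "t \<noteq> t'" "m \<noteq> m'" using assms(3,6) t t' m m' by auto
  then obtain c j where "c \<in> {1,2}" "j < 3" "m = (j + c*t) mod 3" "m' = (j + c*t') mod 3"
    using mod3_line_through[OF t(1) t'(1) m(1) m'(1)] by blast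
  then show ?thesis
    using enum3_mem_sloped_line_iff t t' m m' by blast
qed

lemma sloped_line_unique:
  assumes "c \<in> {1,2}" "c' \<in> {1,2}" "j < 3" "j' < 3" "x \<noteq> y"
    and "{(x, a), (y, e)} \<subseteq> sloped_line b1 b2 c j" "{(x, a), (y, e)} \<subseteq> sloped_line b1 b2 c' j'"
  shows "c = c' \<and> j = j'"
proof -
  have "x \<in> b1" "y \<in> b1" "a \<in> b2" "e \<in> b2" using assms(6) sloped_line_subset by blast+
  then obtain t t' m m' where t: "t < 3" "x = enum3 b1 t" and t': "t' < 3" "y = enum3 b1 t'"
    and m: "m < 3" "a = enum3 b2 m" and m': "m' < 3" "e = enum3 b2 m'"
    using enum3_surj[OF card_b1] enum3_surj[OF card_b2] by metis
  have "t \<noteq> t'" using assms(5) t t' by auto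
  moreover have "m = (j + c*t) mod 3" "m' = (j + c*t') mod 3" "m = (j' + c'*t) mod 3" "m' = (j' + c'*t') mod 3"
    using assms(6,7) enum3_mem_sloped_line_iff t t' m m' by auto
  then have "(j + c*t) mod 3 = (j' + c'*t) mod 3" "(j + c*t') mod 3 = (j' + c'*t') mod 3" by simp_all
  ultimately show ?thesis using mod3_line_unique[OF t(1) t'(1) _ assms(1-4)] by blast
qed

lemma sloped_line_eq_imp_params_eq:
  assumes "c \<in> {1,2}" "c' \<in> {1,2}" "j < 3" "j' < 3"
    and "sloped_line b1 b2 c j = sloped_line b1 b2 c' j'"
  shows "c = c' \<and> j = j'"
proof -
  have "(enum3 b1 0, enum3 b2 j) \<in> sloped_line b1 b2 c j"
    "(enum3 b1 1, enum3 b2 ((j + c) mod 3)) \<in> sloped_line b1 b2 c j"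
    using enum3_mem_sloped_line_iff assms(3) by simp_all
  moreover have "enum3 b1 0 \<noteq> enum3 b1 1"
    using bij_betw_enum3[OF card_b1] unfolding bij_betw_def by (auto dest: inj_onD)
  ultimately show ?thesis using sloped_line_unique[OF assms(1-4)] assms(5) by blast
qed

lemma sum_sloped_lines_through:
  assumes "c \<in> {1,2}"
  shows "(\<Sum>j<3. if (x, a) \<in> sloped_line b1 b2 c j then v else 0)
    = (if x \<in> b1 \<and> a \<in> b2 then v else (0::int))"
proof (cases "x \<in> b1 \<and> a \<in> b2")
  case True
  then obtain t m where t: "t < 3" "x = enum3 b1 t" and m: "m < 3" "a = enum3 b2 m"
    using enum3_surj[OF card_b1] enum3_surj[OF card_b2] by metis
  have "(\<Sum>j<3. if (x, a) \<in> sloped_line b1 b2 c j then v else 0)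
      = (\<Sum>j<3. if m = (j + c*t) mod 3 then v else 0)"
    using enum3_mem_sloped_line_iff t m by simp
  also have "\<dots> = v" using mod3_offset_unique t(1) m(1) assms by blast
  finally show ?thesis using True by simp
next
  case False
  then have "(x, a) \<notin> sloped_line b1 b2 c j" for j using sloped_line_subset by blast
  then show ?thesis using False by auto
qed

lemma sloped_line_pair_coords_distinct:
  assumes "c \<in> {1,2}" "{P, Q} \<subseteq> sloped_line b1 b2 c j" "P \<noteq> Q"
  shows "fst P \<noteq> fst Q" "snd P \<noteq> snd Q"
  using inj_onD[OF inj_on_fst_sloped_line] inj_onD[OF inj_on_snd_sloped_line[OF assms(1)]] assms(2,3)
  by blast+

end

datatype ('a, 'b) product_label =
  Row "'a set" 'b | Column 'a "'b set" | Sloped "'a set" "'b set" nat nat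

fun label_block :: "('a, 'b) product_label \<Rightarrow> ('a \<times> 'b) set" where
  "label_block (Row b a) = b \<times> {a}"
| "label_block (Column x b) = {x} \<times> b"
| "label_block (Sloped b1 b2 c j) = sloped_line b1 b2 c j"

definition product_labels ::
    "'a set \<Rightarrow> 'a set set \<Rightarrow> 'b set \<Rightarrow> 'b set set \<Rightarrow> ('a, 'b) product_label set" where
  "product_labels X1 B1 X2 B2 =
     (\<lambda>(b, a). Row b a) ` (B1 \<times> X2) \<union> (\<lambda>(x, b). Column x b) ` (X1 \<times> B2) \<union>
     (\<lambda>(b1, b2, c, j). Sloped b1 b2 c j) ` (B1 \<times> B2 \<times> {1, 2} \<times> {..<3})"

definition product_blocks :: "'a set \<Rightarrow> 'a set set \<Rightarrow> 'b set \<Rightarrow> 'b set set \<Rightarrow> ('a \<times> 'b) set set" where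
  "product_blocks X1 B1 X2 B2 = label_block ` product_labels X1 B1 X2 B2"

lemma product_labels_cases [consumes 1, case_names Row Column Sloped]:
  assumes "l \<in> product_labels X1 B1 X2 B2"
  obtains (Row) b a where "b \<in> B1" "a \<in> X2" "l = Row b a"
    | (Column) x b where "x \<in> X1" "b \<in> B2" "l = Column x b"
    | (Sloped) b1 b2 c j where "b1 \<in> B1" "b2 \<in> B2" "c \<in> {1, 2}" "j < 3" "l = Sloped b1 b2 c j"
  using assms unfolding product_labels_def by auto

lemma Row_in_product_labels: "b \<in> B1 \<Longrightarrow> a \<in> X2 \<Longrightarrow> Row b a \<in> product_labels X1 B1 X2 B2"
  unfolding product_labels_def by blast

lemma Column_in_product_labels: "x \<in> X1 \<Longrightarrow> b \<in> B2 \<Longrightarrow> Column x b \<in> product_labels X1 B1 X2 B2"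
  unfolding product_labels_def by blast

lemma Sloped_in_product_labels:
  "b1 \<in> B1 \<Longrightarrow> b2 \<in> B2 \<Longrightarrow> c \<in> {1, 2} \<Longrightarrow> j < 3 \<Longrightarrow> Sloped b1 b2 c j \<in> product_labels X1 B1 X2 B2"
  unfolding product_labels_def by force

lemma sum_product_labels:
  assumes "finite X1" "finite B1" "finite X2" "finite B2"
  shows "(\<Sum>l\<in>product_labels X1 B1 X2 B2. h l) =
    (\<Sum>(b, a)\<in>B1 \<times> X2. h (Row b a)) + (\<Sum>(x, b)\<in>X1 \<times> B2. h (Column x b)) +
    (\<Sum>(b1, b2, c, j)\<in>B1 \<times> B2 \<times> {1, 2} \<times> {..<3}. h (Sloped b1 b2 c j))"
proof -
  let ?R = "(\<lambda>(b, a). Row b a) ` (B1 \<times> X2)" and ?C = "(\<lambda>(x, b). Column x b) ` (X1 \<times> B2)"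
    and ?S = "(\<lambda>(b1, b2, c, j). Sloped b1 b2 c j) ` (B1 \<times> B2 \<times> {1, 2::nat} \<times> {..<3::nat})"
  have finite: "finite ?R" "finite ?C" "finite ?S" using assms by simp_all
  have "?R \<inter> ?C = {}" "(?R \<union> ?C) \<inter> ?S = {}" by auto
  then have "(\<Sum>l\<in>product_labels X1 B1 X2 B2. h l) = sum h ?R + sum h ?C + sum h ?S"
    unfolding product_labels_def using finite by (simp add: sum.union_disjoint)
  also have "\<dots> = (\<Sum>(b, a)\<in>B1 \<times> X2. h (Row b a)) + (\<Sum>(x, b)\<in>X1 \<times> B2. h (Column x b)) +
    (\<Sum>(b1, b2, c, j)\<in>B1 \<times> B2 \<times> {1, 2} \<times> {..<3}. h (Sloped b1 b2 c j))"
    by (subst (1 2 3) sum.reindex) (auto simp: inj_on_def case_prod_beta)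
  finally show ?thesis .
qed

fun label_weight ::
    "'a set set \<Rightarrow> ('a set \<Rightarrow> int) \<Rightarrow> ('a set \<Rightarrow> int) \<Rightarrow> ('a set \<Rightarrow> int) \<Rightarrow> ('a, 'b) product_label \<Rightarrow> int"
where
  "label_weight B1 f \<alpha> \<beta> (Row b a) = f b"
| "label_weight B1 f \<alpha> \<beta> (Column x b) = - incidence_sum B1 (\<lambda>b. \<alpha> b + \<beta> b) x"
| "label_weight B1 f \<alpha> \<beta> (Sloped b1 b2 c j) = (if c = 1 then \<alpha> b1 else \<beta> b1)"

locale sts_pair =
  fixes X1 :: "'a set" and B1 :: "'a set set" and X2 :: "'b set" and B2 :: "'b set set"
  assumes sts1: "is_sts X1 B1" and sts2: "is_sts X2 B2"
begin

abbreviation labels :: "('a, 'b) product_label set" where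
  "labels \<equiv> product_labels X1 B1 X2 B2"

lemma label_block_subset: "l \<in> labels \<Longrightarrow> label_block l \<subseteq> X1 \<times> X2"
  by (cases rule: product_labels_cases)
    (use sts_block_subset[OF sts1] sts_block_subset[OF sts2] sloped_line_subset
       sts_card_block[OF sts1] sts_card_block[OF sts2] in fastforce)+

lemma card_label_block: "l \<in> labels \<Longrightarrow> card (label_block l) = 3"
  by (cases rule: product_labels_cases)
    (auto simp: card_cartesian_product sts_card_block[OF sts1] sts_card_block[OF sts2] card_sloped_line)

lemma fst_image_label_block:
  assumes "l \<in> labels"
  shows "fst ` label_block l = (case l of Row b a \<Rightarrow> b | Column x b \<Rightarrow> {x} | Sloped b1 b2 c j \<Rightarrow> b1)"
  using assms
proof (cases rule: product_labels_cases)
  case (Column x b)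
  then have "b \<noteq> {}" using sts_block_nonempty[OF sts2] by blast
  with Column show ?thesis by simp
next
  case (Sloped b1 b2 c j)
  then show ?thesis by (simp add: fst_image_sloped_line sts_card_block[OF sts1] sts_card_block[OF sts2])
qed simp

lemma snd_image_label_block:
  assumes "l \<in> labels"
  shows "snd ` label_block l = (case l of Row b a \<Rightarrow> {a} | Column x b \<Rightarrow> b | Sloped b1 b2 c j \<Rightarrow> b2)"
  using assms
proof (cases rule: product_labels_cases)
  case (Row b a)
  then have "b \<noteq> {}" using sts_block_nonempty[OF sts1] by blast
  with Row show ?thesis by simp
next
  case (Sloped b1 b2 c j)
  then show ?thesis by (simp add: snd_image_sloped_line sts_card_block[OF sts1] sts_card_block[OF sts2])
qed simp

lemma sloped_label_params_unique:
  assumes "Sloped b1 b2 c j \<in> labels" "Sloped b1 b2 c' j' \<in> labels"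
    and "sloped_line b1 b2 c j = sloped_line b1 b2 c' j'"
  shows "c = c' \<and> j = j'"
proof -
  have "b1 \<in> B1" "b2 \<in> B2" "c \<in> {1, 2}" "j < 3" "c' \<in> {1, 2}" "j' < 3"
    using assms(1,2) unfolding product_labels_def by auto
  then show ?thesis
    using sloped_line_eq_imp_params_eq[OF sts_card_block[OF sts1] sts_card_block[OF sts2] _ _ _ _ assms(3)]
    by blast
qed

lemma inj_on_label_block: "inj_on label_block labels"
proof (rule inj_onI)
  fix l l' assume l: "l \<in> labels" and l': "l' \<in> labels" and eq: "label_block l = label_block l'"
  have projections_eq:
    "(case l of Row b a \<Rightarrow> b | Column x b \<Rightarrow> {x} | Sloped b1 b2 c j \<Rightarrow> b1) =
     (case l' of Row b a \<Rightarrow> b | Column x b \<Rightarrow> {x} | Sloped b1 b2 c j \<Rightarrow> b1)"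
    "(case l of Row b a \<Rightarrow> {a} | Column x b \<Rightarrow> b | Sloped b1 b2 c j \<Rightarrow> b2) =
     (case l' of Row b a \<Rightarrow> {a} | Column x b \<Rightarrow> b | Sloped b1 b2 c j \<Rightarrow> b2)"
    using fst_image_label_block[OF l] fst_image_label_block[OF l']
      snd_image_label_block[OF l] snd_image_label_block[OF l'] eq by metis+
  have no_singleton: "{z} \<notin> B" if "is_sts X B" for X B and z :: 'c
    using sts_card_block[OF that] by force
  note small_notin = no_singleton[OF sts1] no_singleton[OF sts2]
    sts_block_nonempty[OF sts1] sts_block_nonempty[OF sts2]
  from l show "l = l'"
  proof (cases rule: product_labels_cases)
    case (Row b a)
    with l' projections_eq small_notin show ?thesis
      by (cases rule: product_labels_cases) auto
  next
    case (Column x b)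
    with l' projections_eq small_notin show ?thesis
      by (cases rule: product_labels_cases) auto
  next
    case (Sloped b1 b2 c j)
    from l' this projections_eq small_notin obtain c' j' where "l' = Sloped b1 b2 c' j'"
      by (cases rule: product_labels_cases) auto
    with Sloped l l' eq show ?thesis using sloped_label_params_unique by auto
  qed
qed

lemma label_through_vertical_pair:
  assumes "l \<in> labels" "{(x, a), (x, e)} \<subseteq> label_block l" "a \<noteq> e"
  shows "\<exists>b\<in>B2. l = Column x b \<and> {a, e} \<subseteq> b"
  using assms(1)
proof (cases rule: product_labels_cases)
  case (Sloped b1 b2 c j)
  with assms(2) have "{(x, a), (x, e)} \<subseteq> sloped_line b1 b2 c j" by simp
  from sloped_line_pair_coords_distinct(1)[OF sts_card_block[OF sts1] sts_card_block[OF sts2] _ this]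
  show ?thesis using Sloped assms(3) by simp
qed (use assms(2,3) in auto)

lemma label_through_horizontal_pair:
  assumes "l \<in> labels" "{(x, a), (y, a)} \<subseteq> label_block l" "x \<noteq> y"
  shows "\<exists>b\<in>B1. l = Row b a \<and> {x, y} \<subseteq> b"
  using assms(1)
proof (cases rule: product_labels_cases)
  case (Sloped b1 b2 c j)
  with assms(2) have "{(x, a), (y, a)} \<subseteq> sloped_line b1 b2 c j" by simp
  from sloped_line_pair_coords_distinct(2)[OF sts_card_block[OF sts1] sts_card_block[OF sts2] _ this]
  show ?thesis using Sloped assms(3) by simp
qed (use assms(2,3) in auto)

lemma label_through_skew_pair:
  assumes "l \<in> labels" "{(x, a), (y, e)} \<subseteq> label_block l" "x \<noteq> y" "a \<noteq> e"
  shows "\<exists>b1 b2 c j. l = Sloped b1 b2 c j"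
  using assms(1) by (cases rule: product_labels_cases) (use assms(2-4) in auto)

lemma sloped_label_through_pair_unique:
  assumes "Sloped b1 b2 c j \<in> labels" "Sloped b1' b2' c' j' \<in> labels" "x \<noteq> y" "a \<noteq> e"
    and on_l: "{(x, a), (y, e)} \<subseteq> sloped_line b1 b2 c j"
    and on_l': "{(x, a), (y, e)} \<subseteq> sloped_line b1' b2' c' j'"
  shows "Sloped b1 b2 c j = Sloped b1' b2' c' j'"
proof -
  have l: "b1 \<in> B1" "b2 \<in> B2" "c \<in> {1, 2}" "j < 3" and l': "b1' \<in> B1" "b2' \<in> B2" "c' \<in> {1, 2}" "j' < 3"
    using assms(1,2) unfolding product_labels_def by auto
  note card = sts_card_block[OF sts1 l(1)] sts_card_block[OF sts2 l(2)]
    sts_card_block[OF sts1 l'(1)] sts_card_block[OF sts2 l'(2)]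
  have "{(x, a), (y, e)} \<subseteq> b1 \<times> b2" "{(x, a), (y, e)} \<subseteq> b1' \<times> b2'"
    using subset_trans[OF on_l sloped_line_subset[OF card(1,2)]]
      subset_trans[OF on_l' sloped_line_subset[OF card(3,4)]] by simp_all
  then have "b1 = b1'" "b2 = b2'"
    using sts_block_unique[OF sts1 l(1) l'(1) _ _ assms(3)] sts_block_unique[OF sts2 l(2) l'(2) _ _ assms(4)]
    by simp_all
  moreover from this have "c = c' \<and> j = j'"
    using sloped_line_unique[OF card(1,2) l(3) l'(3) l(4) l'(4) assms(3) on_l] on_l' by simp
  ultimately show ?thesis by simp
qed

lemma label_through_pair_unique:
  assumes "l \<in> labels" "l' \<in> labels" "P \<noteq> Q"
    and "{P, Q} \<subseteq> label_block l" "{P, Q} \<subseteq> label_block l'"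
  shows "l = l'"
proof -
  obtain x a y e where P: "P = (x, a)" and Q: "Q = (y, e)" by fastforce
  consider (vertical) "x = y" | (horizontal) "a = e" | (skew) "x \<noteq> y" "a \<noteq> e" by blast
  then show ?thesis
  proof cases
    case vertical
    then have "a \<noteq> e" using assms(3) P Q by simp
    have "{(x, a), (x, e)} \<subseteq> label_block l" "{(x, a), (x, e)} \<subseteq> label_block l'"
      using assms(4,5) P Q vertical by simp_all
    then obtain b b' where "b \<in> B2" "l = Column x b" "{a, e} \<subseteq> b"
      and "b' \<in> B2" "l' = Column x b'" "{a, e} \<subseteq> b'"
      using label_through_vertical_pair assms(1,2) \<open>a \<noteq> e\<close> by meson
    then show ?thesis using sts_block_unique[OF sts2 \<open>b \<in> B2\<close> \<open>b' \<in> B2\<close>] \<open>a \<noteq> e\<close> by simp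
  next
    case horizontal
    then have "x \<noteq> y" using assms(3) P Q by simp
    have "{(x, a), (y, a)} \<subseteq> label_block l" "{(x, a), (y, a)} \<subseteq> label_block l'"
      using assms(4,5) P Q horizontal by simp_all
    then obtain b b' where "b \<in> B1" "l = Row b a" "{x, y} \<subseteq> b"
      and "b' \<in> B1" "l' = Row b' a" "{x, y} \<subseteq> b'"
      using label_through_horizontal_pair assms(1,2) \<open>x \<noteq> y\<close> by meson
    then show ?thesis using sts_block_unique[OF sts1 \<open>b \<in> B1\<close> \<open>b' \<in> B1\<close>] \<open>x \<noteq> y\<close> by simp
  next
    case skew
    have pair: "{(x, a), (y, e)} \<subseteq> label_block l" "{(x, a), (y, e)} \<subseteq> label_block l'"
      using assms(4,5) P Q by simp_all
    obtain b1 b2 c j b1' b2' c' j' where "l = Sloped b1 b2 c j" "l' = Sloped b1' b2' c' j'"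
      using label_through_skew_pair[OF assms(1) pair(1) skew] label_through_skew_pair[OF assms(2) pair(2) skew]
      by blast
    then show ?thesis
      using sloped_label_through_pair_unique[of b1 b2 c j b1' b2' c' j' x y a e] assms(1,2) pair skew by simp
  qed
qed

lemma label_through_pair_exists:
  assumes "P \<in> X1 \<times> X2" "Q \<in> X1 \<times> X2" "P \<noteq> Q"
  shows "\<exists>l\<in>labels. {P, Q} \<subseteq> label_block l"
proof -
  obtain x a y e where P: "P = (x, a)" and Q: "Q = (y, e)" by fastforce
  have in_X: "x \<in> X1" "a \<in> X2" "y \<in> X1" "e \<in> X2" using assms(1,2) P Q by auto
  consider (vertical) "x = y" | (horizontal) "a = e" | (skew) "x \<noteq> y" "a \<noteq> e" by blast
  then show ?thesis
  proof cases
    case vertical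
    then obtain b where "b \<in> B2" "a \<in> b" "e \<in> b"
      using sts_block_through[OF sts2 in_X(2,4)] assms(3) P Q by auto
    then have "Column x b \<in> labels" "{P, Q} \<subseteq> label_block (Column x b)"
      using Column_in_product_labels in_X vertical P Q by auto
    then show ?thesis by blast
  next
    case horizontal
    then obtain b where "b \<in> B1" "x \<in> b" "y \<in> b"
      using sts_block_through[OF sts1 in_X(1,3)] assms(3) P Q by auto
    then have "Row b a \<in> labels" "{P, Q} \<subseteq> label_block (Row b a)"
      using Row_in_product_labels in_X horizontal P Q by auto
    then show ?thesis by blast
  next
    case skew
    obtain b1 b2 where "b1 \<in> B1" "x \<in> b1" "y \<in> b1" "b2 \<in> B2" "a \<in> b2" "e \<in> b2"
      using sts_block_through[OF sts1 in_X(1,3)] sts_block_through[OF sts2 in_X(2,4)] skew by metis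
    moreover obtain c j where "c \<in> {1, 2}" "j < 3" "{P, Q} \<subseteq> sloped_line b1 b2 c j"
      using sloped_line_through[OF sts_card_block[OF sts1] sts_card_block[OF sts2]] calculation skew P Q
      by metis
    ultimately have "Sloped b1 b2 c j \<in> labels" "{P, Q} \<subseteq> label_block (Sloped b1 b2 c j)"
      using Sloped_in_product_labels[of b1 B1 b2 B2 c j] by simp_all
    then show ?thesis by blast
  qed
qed

lemma is_sts_product: "is_sts (X1 \<times> X2) (product_blocks X1 B1 X2 B2)"
  unfolding product_blocks_def
proof (rule is_stsI)
  show "finite (X1 \<times> X2)" using sts_finite[OF sts1] sts_finite[OF sts2] by simp
  show "b \<subseteq> X1 \<times> X2 \<and> card b = 3" if "b \<in> label_block ` labels" for b
    using that label_block_subset card_label_block by auto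
  show "\<exists>b\<in>label_block ` labels. P \<in> b \<and> Q \<in> b"
    if "P \<in> X1 \<times> X2" "Q \<in> X1 \<times> X2" "P \<noteq> Q" for P Q
    using label_through_pair_exists[OF that] by auto
  fix P Q b b' assume "P \<noteq> Q" "b \<in> label_block ` labels" "b' \<in> label_block ` labels"
    "{P, Q} \<subseteq> b" "{P, Q} \<subseteq> b'"
  then show "b = b'" using label_through_pair_unique by blast
qed

lemma sum_row_labels_through:
  assumes "a \<in> X2"
  shows "(\<Sum>(b, a')\<in>B1 \<times> X2. if (x, a) \<in> label_block (Row b a') then g b else 0) = incidence_sum B1 g x"
proof -
  have "(\<Sum>(b, a')\<in>B1 \<times> X2. if (x, a) \<in> label_block (Row b a') then g b else 0)
      = (\<Sum>b\<in>B1. \<Sum>a'\<in>X2. if a = a' then (if x \<in> b then g b else 0) else 0)"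
    unfolding sum.cartesian_product by (intro sum.cong) auto
  also have "\<dots> = (\<Sum>b\<in>B1. if x \<in> b then g b else 0)"
    using assms sts_finite[OF sts2] by simp
  also have "\<dots> = incidence_sum B1 g x"
    by (rule incidence_sum_eq_sum_if[OF sts_finite_blocks[OF sts1], symmetric])
  finally show ?thesis .
qed

lemma sum_column_labels_through:
  assumes "x \<in> X1"
  shows "(\<Sum>(x', b)\<in>X1 \<times> B2. if (x, a) \<in> label_block (Column x' b) then g x' else 0)
    = (\<Sum>b\<in>{b\<in>B2. a \<in> b}. g x)"
proof -
  have "(\<Sum>(x', b)\<in>X1 \<times> B2. if (x, a) \<in> label_block (Column x' b) then g x' else 0)
      = (\<Sum>x'\<in>X1. \<Sum>b\<in>B2. if x = x' \<and> a \<in> b then g x' else 0)"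
    unfolding sum.cartesian_product by (intro sum.cong) auto
  also have "\<dots> = (\<Sum>x'\<in>X1. if x = x' then (\<Sum>b\<in>B2. if a \<in> b then g x else 0) else 0)"
    by (intro sum.cong) auto
  also have "\<dots> = (\<Sum>b\<in>B2. if a \<in> b then g x else 0)"
    using assms sts_finite[OF sts1] by simp
  also have "\<dots> = (\<Sum>b\<in>{b\<in>B2. a \<in> b}. g x)"
    by (rule sum.inter_filter[OF sts_finite_blocks[OF sts2], symmetric])
  finally show ?thesis .
qed

lemma sum_sloped_labels_through:
  "(\<Sum>(b1, b2, c, j)\<in>B1 \<times> B2 \<times> {1, 2} \<times> {..<3}.
      if (x, a) \<in> label_block (Sloped b1 b2 c j) then (if c = 1 then \<alpha> b1 else \<beta> b1) else 0)
    = (\<Sum>b\<in>{b\<in>B2. a \<in> b}. incidence_sum B1 (\<lambda>b. \<alpha> b + \<beta> b) x)"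
proof -
  have "(\<Sum>(b1, b2, c, j)\<in>B1 \<times> B2 \<times> {1, 2} \<times> {..<3}.
      if (x, a) \<in> label_block (Sloped b1 b2 c j) then (if c = 1 then \<alpha> b1 else \<beta> b1) else 0)
    = (\<Sum>b1\<in>B1. \<Sum>b2\<in>B2. \<Sum>c\<in>{1, 2}. \<Sum>j<3.
      if (x, a) \<in> sloped_line b1 b2 c j then (if c = 1 then \<alpha> b1 else \<beta> b1) else 0)"
    by (simp add: sum.cartesian_product)
  also have "\<dots> = (\<Sum>b1\<in>B1. \<Sum>b2\<in>B2. if a \<in> b2 then (if x \<in> b1 then \<alpha> b1 + \<beta> b1 else 0) else 0)"
  proof (intro sum.cong refl)
    fix b1 b2 assume "b1 \<in> B1" "b2 \<in> B2"
    then show "(\<Sum>c\<in>{1, 2}. \<Sum>j<3.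
        if (x, a) \<in> sloped_line b1 b2 c j then (if c = 1 then \<alpha> b1 else \<beta> b1) else 0)
      = (if a \<in> b2 then (if x \<in> b1 then \<alpha> b1 + \<beta> b1 else 0) else 0)"
      using sum_sloped_lines_through[OF sts_card_block[OF sts1] sts_card_block[OF sts2]] by simp
  qed
  also have "\<dots> = (\<Sum>b2\<in>B2. if a \<in> b2 then incidence_sum B1 (\<lambda>b. \<alpha> b + \<beta> b) x else 0)"
    by (subst sum.swap, intro sum.cong refl)
      (simp add: incidence_sum_eq_sum_if[OF sts_finite_blocks[OF sts1]])
  also have "\<dots> = (\<Sum>b\<in>{b\<in>B2. a \<in> b}. incidence_sum B1 (\<lambda>b. \<alpha> b + \<beta> b) x)"
    by (rule sum.inter_filter[OF sts_finite_blocks[OF sts2], symmetric])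
  finally show ?thesis .
qed

lemma finite_product_labels: "finite labels"
  unfolding product_labels_def
  using sts_finite[OF sts1] sts_finite[OF sts2] sts_finite_blocks[OF sts1] sts_finite_blocks[OF sts2] by simp

lemma sum_label_weights_through:
  assumes "x \<in> X1" "a \<in> X2"
  shows "(\<Sum>l\<in>labels. if (x, a) \<in> label_block l then label_weight B1 f \<alpha> \<beta> l else 0) = incidence_sum B1 f x"
proof -
  let ?N = "incidence_sum B1 (\<lambda>b. \<alpha> b + \<beta> b)"
  have "(\<Sum>l\<in>labels. if (x, a) \<in> label_block l then label_weight B1 f \<alpha> \<beta> l else 0)
    = (\<Sum>(b, a')\<in>B1 \<times> X2. if (x, a) \<in> label_block (Row b a') then f b else 0)
      + (\<Sum>(x', b)\<in>X1 \<times> B2. if (x, a) \<in> label_block (Column x' b) then - ?N x' else 0)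
      + (\<Sum>(b1, b2, c, j)\<in>B1 \<times> B2 \<times> {1, 2} \<times> {..<3}.
          if (x, a) \<in> label_block (Sloped b1 b2 c j) then (if c = 1 then \<alpha> b1 else \<beta> b1) else 0)"
    by (simp only: sum_product_labels[OF sts_finite[OF sts1] sts_finite_blocks[OF sts1]
        sts_finite[OF sts2] sts_finite_blocks[OF sts2]] label_weight.simps)
  also have "\<dots> = incidence_sum B1 f x + (\<Sum>b\<in>{b\<in>B2. a \<in> b}. - ?N x) + (\<Sum>b\<in>{b\<in>B2. a \<in> b}. ?N x)"
    unfolding sum_row_labels_through[OF assms(2)] sum_column_labels_through[OF assms(1)]
      sum_sloped_labels_through ..
  finally show ?thesis by (simp add: sum_negf)
qed

lemma product_has_zero_sum_flow:
  assumes flow: "is_zero_sum_flow X1 B1 k f"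
    and split_bounds: "\<And>b. b \<in> B1 \<Longrightarrow> \<alpha> b \<noteq> 0 \<and> \<bar>\<alpha> b\<bar> \<le> int k - 1 \<and> \<beta> b \<noteq> 0 \<and> \<bar>\<beta> b\<bar> \<le> int k - 1"
    and sum_bounds: "\<And>x. x \<in> X1 \<Longrightarrow>
      incidence_sum B1 (\<lambda>b. \<alpha> b + \<beta> b) x \<noteq> 0 \<and> \<bar>incidence_sum B1 (\<lambda>b. \<alpha> b + \<beta> b) x\<bar> \<le> int k - 1"
  shows "has_zero_sum_flow (X1 \<times> X2) (product_blocks X1 B1 X2 B2) k"
  unfolding product_blocks_def
proof (rule has_zero_sum_flow_of_labelling[OF finite_product_labels inj_on_label_block])
  fix l assume "l \<in> labels"
  then show "label_weight B1 f \<alpha> \<beta> l \<noteq> 0 \<and> \<bar>label_weight B1 f \<alpha> \<beta> l\<bar> \<le> int k - 1"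
    using flow split_bounds sum_bounds unfolding is_zero_sum_flow_def
    by (cases rule: product_labels_cases) auto
next
  fix P assume "P \<in> X1 \<times> X2"
  then obtain x a where "P = (x, a)" "x \<in> X1" "a \<in> X2" by blast
  then show "(\<Sum>l\<in>labels. if P \<in> label_block l then label_weight B1 f \<alpha> \<beta> l else 0) = 0"
    using sum_label_weights_through flow unfolding is_zero_sum_flow_def incidence_sum_def by simp
qed

end

definition star_weight :: "'a set set \<Rightarrow> 'a \<Rightarrow> 'a set set \<Rightarrow> 'a set \<Rightarrow> int" where
  "star_weight B p S b = (if b \<in> S then -1 else if b \<in> B \<and> p \<in> b then 1 else 0)"

lemma incidence_sum_star_weight_centre:
  assumes "finite B" "S \<subseteq> {b\<in>B. p \<in> b}"
  shows "incidence_sum B (star_weight B p S) p = int (card {b\<in>B. p \<in> b}) - 2 * int (card S)"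
proof -
  let ?star = "{b\<in>B. p \<in> b}"
  have "finite ?star" using assms(1) by simp
  have "incidence_sum B (star_weight B p S) p = (\<Sum>b\<in>?star. if b \<in> S then -1 else 1)"
    unfolding incidence_sum_def star_weight_def by (rule sum.cong) auto
  also have "\<dots> = (\<Sum>b\<in>?star - S. if b \<in> S then -1 else 1) + (\<Sum>b\<in>S. if b \<in> S then -1 else 1)"
    by (rule sum.subset_diff[OF assms(2) \<open>finite ?star\<close>])
  also have "\<dots> = int (card (?star - S)) - int (card S)" by simp
  also have "\<dots> = int (card ?star) - 2 * int (card S)"
    using card_Diff_subset[OF finite_subset[OF assms(2) \<open>finite ?star\<close>] assms(2)]
      card_mono[OF \<open>finite ?star\<close> assms(2)]
    by simp
  finally show ?thesis .
qed

lemma incidence_sum_star_weight_off_centre: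
  assumes sts: "is_sts X B" and "S \<subseteq> {b\<in>B. p \<in> b}" "p \<in> X" "x \<in> X" "x \<noteq> p"
  shows "incidence_sum B (star_weight B p S) x \<in> {-1, 1}"
proof -
  obtain b0 where b0: "b0 \<in> B" "x \<in> b0" "p \<in> b0"
    using sts_block_through[OF sts assms(4,3,5)] by blast
  have "star_weight B p S b = 0" if "b \<in> B" "x \<in> b" "b \<noteq> b0" for b
  proof -
    have "p \<notin> b" using sts_block_unique[OF sts that(1) b0(1), of x p] that b0 assms(5) by auto
    then show ?thesis using assms(2) unfolding star_weight_def by auto
  qed
  then have "incidence_sum B (star_weight B p S) x = (\<Sum>b\<in>{b0}. star_weight B p S b)"
    unfolding incidence_sum_def using sts_finite_blocks[OF sts] b0
    by (intro sum.mono_neutral_right) auto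
  then show ?thesis using b0 unfolding star_weight_def by auto
qed

lemma star_weighting:
  assumes sts: "is_sts X B" and "p \<in> X" "q \<in> X" "p \<noteq> q"
  obtains \<mu> where "\<And>b. \<mu> b \<in> {-1, 0, 1}" "\<And>x. x \<in> X \<Longrightarrow> incidence_sum B \<mu> x \<in> {-1, 1, 2}"
proof -
  let ?star = "{b\<in>B. p \<in> b}"
  have "(card ?star - 1) div 2 \<le> card ?star" by simp
  then obtain S where S: "S \<subseteq> ?star" "card S = (card ?star - 1) div 2"
    by (rule obtain_subset_with_card_n)
  have "?star \<noteq> {}" using sts_block_through[OF sts assms(2-4)] by blast
  then have "card ?star \<ge> 1" using sts_finite_blocks[OF sts] by (simp add: Suc_le_eq card_gt_0_iff)
  then have "int (card ?star) - 2 * int (card S) = 1 \<or> int (card ?star) - 2 * int (card S) = 2"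
    unfolding S(2) by presburger
  then have "incidence_sum B (star_weight B p S) x \<in> {-1, 1, 2}" if "x \<in> X" for x
    using incidence_sum_star_weight_centre[OF sts_finite_blocks[OF sts] S(1)]
      incidence_sum_star_weight_off_centre[OF sts S(1) assms(2) that]
    by (cases "x = p") auto
  moreover have "star_weight B p S b \<in> {-1, 0, 1}" for b unfolding star_weight_def by simp
  ultimately show thesis using that by blast
qed

lemma product_sts_with_flow:
  assumes sts1: "is_sts X1 B1" and sts2: "is_sts X2 B2" and "card X1 \<ge> 2" "k \<ge> 3"
    and "has_zero_sum_flow X1 B1 k"
  shows "\<exists>(X :: nat set) B. is_sts X B \<and> card X = card X1 * card X2 \<and> has_zero_sum_flow X B k"
proof -
  interpret sts_pair X1 B1 X2 B2 using sts1 sts2 by unfold_locales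
  obtain f where f: "is_zero_sum_flow X1 B1 k f"
    using assms(5) unfolding has_zero_sum_flow_def by blast
  obtain P where "P \<subseteq> X1" "card P = 2" using obtain_subset_with_card_n[OF assms(3)] by blast
  then obtain p q where pq: "p \<in> X1" "q \<in> X1" "p \<noteq> q" by (auto simp: card_2_iff)
  obtain \<mu> where \<mu>: "\<And>b. \<mu> b \<in> {-1, 0, 1}" "\<And>x. x \<in> X1 \<Longrightarrow> incidence_sum B1 \<mu> x \<in> {-1, 1, 2}"
    using star_weighting[OF sts1 pq] by metis
  define \<alpha> :: "'a set \<Rightarrow> int" where "\<alpha> b = (if \<mu> b = 1 then 2 else 1)" for b
  define \<beta> :: "'a set \<Rightarrow> int" where "\<beta> b = (if \<mu> b = -1 then -2 else -1)" for b
  have split_bounds: "\<alpha> b \<noteq> 0 \<and> \<bar>\<alpha> b\<bar> \<le> int k - 1 \<and> \<beta> b \<noteq> 0 \<and> \<bar>\<beta> b\<bar> \<le> int k - 1" for b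
    using \<open>k \<ge> 3\<close> unfolding \<alpha>_def \<beta>_def by auto
  have "(\<lambda>b. \<alpha> b + \<beta> b) = \<mu>" using \<mu>(1) unfolding \<alpha>_def \<beta>_def by fastforce
  then have sum_bounds: "incidence_sum B1 (\<lambda>b. \<alpha> b + \<beta> b) x \<noteq> 0 \<and>
      \<bar>incidence_sum B1 (\<lambda>b. \<alpha> b + \<beta> b) x\<bar> \<le> int k - 1" if "x \<in> X1" for x
    using \<mu>(2)[OF that] \<open>k \<ge> 3\<close> by auto
  have "has_zero_sum_flow (X1 \<times> X2) (product_blocks X1 B1 X2 B2) k"
    by (rule product_has_zero_sum_flow[OF f split_bounds sum_bounds])
  then show ?thesis
    using sts_with_flow_on_nat[OF is_sts_product] by (simp add: card_cartesian_product)
qed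

theorem mainTheorem1:
  fixes v w k :: nat and X1 :: "'a set" and B1 :: "'a set set"
    and X2 :: "'b set" and B2 :: "'b set set"
  assumes "v \<ge> 3" and "w \<ge> 3" and "k \<ge> 3"
    and "is_sts X1 B1" and "card X1 = v"
    and "is_sts X2 B2" and "card X2 = w"
    and "has_zero_sum_flow X1 B1 k \<or> has_zero_sum_flow X2 B2 k"
  shows "\<exists>(X :: nat set) B. is_sts X B \<and> card X = v * w \<and> has_zero_sum_flow X B k"
  using assms(8)
proof
  assume "has_zero_sum_flow X1 B1 k"
  then show ?thesis using product_sts_with_flow[OF assms(4,6) _ assms(3)] assms(1,5,7) by simp
next
  assume "has_zero_sum_flow X2 B2 k"
  then show ?thesis
    using product_sts_with_flow[OF assms(6,4) _ assms(3)] assms(2,5,7) by (simp add: mult.commute)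
qed

end
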